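(* Let $\tilde A,\tilde B\in\mathbb{R}^{m\times n}$ and fix any $(i,j)\in\{1,\dots,m\}\times\{1,\dots,n\}$. Define $\bar A=\tilde A-\mathbf{1}_m\tilde A_{(i)}-(\tilde A^{(j)}-\tilde a_{i,j}\mathbf{1}_m)\mathbf{1}_n^\mathsf{T}$ and $\bar B=\tilde B-\mathbf{1}_m\tilde B_{(i)}-(\tilde B^{(j)}-\tilde b_{i,j}\mathbf{1}_m)\mathbf{1}_n^\mathsf{T}$, and for $\gamma\in\mathbb{R}$ $\hat A(\gamma)=\tilde A-(\mathbf{1}_m\tilde A_{(i)}+\gamma\mathbf{1}_m\tilde B_{(i)})$, $\hat B(\gamma)=\gamma\tilde B-\big((\tilde A^{(j)}-\tilde a_{i,j}\mathbf{1}_m)\mathbf{1}_n^\mathsf{T}+\gamma(\tilde B^{(j)}-\tilde b_{i,j}\mathbf{1}_m)\mathbf{1}_n^\mathsf{T}\big)$. If there exists $\gamma^*\in\mathbb{R}_{>0}$ with $\operatorname{rank}(\bar A+\gamma^*\bar B)=1$, then the game $(m,n,\tilde A,\tilde B)$ is strategically equivalent to the rank-1 game $(m,n,\hat A(\gamma^* ),\hat B(\gamma^* ))$.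
   Context: $\mathbf{1}_k$ is the all-ones vector of length $k$. For a matrix $M$, $M_{(i)}$ is its $i$-th row (a row vector), $M^{(j)}$ its $j$-th column, and $m_{i,j}$ its $(i,j)$ entry. A bimatrix game $(m,n,A,B)$ has payoff matrices $A,B\in\mathbb{R}^{m\times n}$; its Nash equilibrium set is the set of mixed strategy pairs $(\mathbf{p}^*,\mathbf{q}^* )\in\Delta_m\times\Delta_n$ with $\mathbf{p}^{*\mathsf{T}}A\mathbf{q}^*\ge\mathbf{p}^\mathsf{T}A\mathbf{q}^*$ for all $\mathbf{p}\in\Delta_m$ and $\mathbf{p}^{*\mathsf{T}}B\mathbf{q}^*\ge\mathbf{p}^{*\mathsf{T}}B\mathbf{q}$ for all $\mathbf{q}\in\Delta_n$. Two games are strategically equivalent iff they have the same Nash equilibrium set. A game $(m,n,A,B)$ is rank-1 if $\operatorname{rank}(A+B)=1$. *)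

theory Defs
  imports "HOL-Analysis.Analysis"
begin

text \<open>Matrices in R^(m x n) are rendered as real^'n^'m (rows indexed by the finite type 'm,
  columns by 'n). Mixed strategies are vectors in the probability simplex.\<close>

definition ones :: "real^'k" where "ones = (\<chi> k. 1)"

definition outer :: "real^'m \<Rightarrow> real^'n \<Rightarrow> real^'n^'m" where
  "outer u v = (\<chi> k l. u $ k * v $ l)"

definition row_of :: "real^'n^'m \<Rightarrow> 'm \<Rightarrow> real^'n" where
  "row_of M i = M $ i"

definition col_of :: "real^'n^'m \<Rightarrow> 'n \<Rightarrow> real^'m" where
  "col_of M j = (\<chi> k. M $ k $ j)"

definition std_simplex :: "(real^'k) set" where
  "std_simplex = {p. (\<forall>k. 0 \<le> p $ k) \<and> sum (\<lambda>k. p $ k) UNIV = 1}"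

definition nash_set :: "real^'n^'m \<Rightarrow> real^'n^'m \<Rightarrow> ((real^'m) \<times> (real^'n)) set" where
  "nash_set A B = {(p, q). p \<in> std_simplex \<and> q \<in> std_simplex \<and>
      (\<forall>p' \<in> std_simplex. p' \<bullet> (A *v q) \<le> p \<bullet> (A *v q)) \<and>
      (\<forall>q' \<in> std_simplex. p \<bullet> (B *v q') \<le> p \<bullet> (B *v q))}"

definition strat_equiv :: "real^'n^'m \<Rightarrow> real^'n^'m \<Rightarrow> real^'n^'m \<Rightarrow> real^'n^'m \<Rightarrow> bool" where
  "strat_equiv A B A' B' \<longleftrightarrow> nash_set A B = nash_set A' B'"

definition rank1_game :: "real^'n^'m \<Rightarrow> real^'n^'m \<Rightarrow> bool" where
  "rank1_game A B \<longleftrightarrow> rank (A + B) = 1"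

definition bar_mat :: "real^'n^'m \<Rightarrow> 'm \<Rightarrow> 'n \<Rightarrow> real^'n^'m" where
  "bar_mat A i j = A - outer ones (row_of A i) - outer (col_of A j - (A $ i $ j) *\<^sub>R ones) ones"

definition hatA :: "real^'n^'m \<Rightarrow> real^'n^'m \<Rightarrow> 'm \<Rightarrow> real \<Rightarrow> real^'n^'m" where
  "hatA A B i \<gamma> = A - (outer ones (row_of A i) + \<gamma> *\<^sub>R outer ones (row_of B i))"

definition hatB :: "real^'n^'m \<Rightarrow> real^'n^'m \<Rightarrow> 'n \<Rightarrow> 'm \<Rightarrow> real \<Rightarrow> real^'n^'m" where
  "hatB A B j i \<gamma> = \<gamma> *\<^sub>R B - (outer (col_of A j - (A $ i $ j) *\<^sub>R ones) ones
        + \<gamma> *\<^sub>R outer (col_of B j - (B $ i $ j) *\<^sub>R ones) ones)"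

end

theory Submission
  imports Defs
begin

text \<open>Each player's payoff may be changed by a term that does not depend on that player's own
  strategy (adding a constant to every column of the row player's matrix, or to every row of
  the column player's matrix) and may be scaled by a positive factor without changing any best
  response. Both \<open>hatA \<gamma>\<close> and \<open>hatB \<gamma>\<close> arise from \<open>A\<close> and \<open>B\<close> in this way, and their sum is
  \<open>bar_mat A + \<gamma> bar_mat B\<close>, of rank 1 by assumption.\<close>

lemma outer_mult_vec: "outer u v *v q = (v \<bullet> q) *\<^sub>R u"
  by (simp add: vec_eq_iff outer_def matrix_vector_mult_def inner_vec_def sum_distrib_left mult_ac)

lemma std_simplex_inner_ones: "p \<in> std_simplex \<Longrightarrow> p \<bullet> ones = 1"
  by (simp add: std_simplex_def inner_vec_def ones_def)

lemma ones_inner_std_simplex: "p \<in> std_simplex \<Longrightarrow> ones \<bullet> p = 1"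
  by (simp add: std_simplex_def inner_vec_def ones_def)

lemma nash_set_add_outer_ones_left: "nash_set (A + outer ones v) B = nash_set A B"
proof -
  have "p \<bullet> ((A + outer ones v) *v q) = p \<bullet> (A *v q) + v \<bullet> q" if "p \<in> std_simplex" for p q
    using std_simplex_inner_ones[OF that]
    by (simp add: matrix_vector_mult_add_rdistrib outer_mult_vec inner_add_right)
  then show ?thesis
    by (auto simp: nash_set_def)
qed

lemma nash_set_add_outer_ones_right: "nash_set A (B + outer u ones) = nash_set A B"
proof -
  have "p \<bullet> ((B + outer u ones) *v q) = p \<bullet> (B *v q) + p \<bullet> u" if "q \<in> std_simplex" for p q
    using ones_inner_std_simplex[OF that]
    by (simp add: matrix_vector_mult_add_rdistrib outer_mult_vec inner_add_right)
  then show ?thesis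
    by (auto simp: nash_set_def)
qed

lemma nash_set_scaleR_right:
  assumes "c > 0"
  shows "nash_set A (c *\<^sub>R B) = nash_set A B"
  using assms
  by (simp add: nash_set_def flip: matrix_scaleR_vector_ac add: matrix_vector_mult_scaleR)

lemma hatA_eq_add_outer_ones: "hatA A B i \<gamma> = A + outer ones (- (row_of A i + \<gamma> *\<^sub>R row_of B i))"
  by (simp add: vec_eq_iff hatA_def outer_def algebra_simps)

lemma hatB_eq_scaleR_add_outer_ones:
  "hatB A B j i \<gamma> = \<gamma> *\<^sub>R B
     + outer (- (col_of A j - (A $ i $ j) *\<^sub>R ones + \<gamma> *\<^sub>R (col_of B j - (B $ i $ j) *\<^sub>R ones))) ones"
  by (simp add: vec_eq_iff hatB_def outer_def algebra_simps)

lemma hatA_add_hatB: "hatA A B i \<gamma> + hatB A B j i \<gamma> = bar_mat A i j + \<gamma> *\<^sub>R bar_mat B i j"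
  by (simp add: vec_eq_iff hatA_def hatB_def bar_mat_def outer_def ones_def row_of_def col_of_def
      algebra_simps)

theorem mainTheorem4:
  fixes A B :: "real^'n^'m" and i :: 'm and j :: 'n and \<gamma> :: real
  assumes "\<gamma> > 0" and "rank (bar_mat A i j + \<gamma> *\<^sub>R bar_mat B i j) = 1"
  shows "rank1_game (hatA A B i \<gamma>) (hatB A B j i \<gamma>) \<and>
         strat_equiv A B (hatA A B i \<gamma>) (hatB A B j i \<gamma>)"
proof
  show "rank1_game (hatA A B i \<gamma>) (hatB A B j i \<gamma>)"
    using assms(2) by (simp add: rank1_game_def hatA_add_hatB)
  have "nash_set (hatA A B i \<gamma>) (hatB A B j i \<gamma>) = nash_set A (\<gamma> *\<^sub>R B)"
    by (simp only: hatA_eq_add_outer_ones hatB_eq_scaleR_add_outer_ones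
        nash_set_add_outer_ones_left nash_set_add_outer_ones_right)
  also have "\<dots> = nash_set A B"
    using assms(1) by (rule nash_set_scaleR_right)
  finally show "strat_equiv A B (hatA A B i \<gamma>) (hatB A B j i \<gamma>)"
    by (simp add: strat_equiv_def)
qed

end
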